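(* For every integer $n\ge 0$: if $n\equiv 0,1\pmod 4$ then $p_0(n) > \tfrac12 p(n)$, and if $n\equiv 2,3\pmod 4$ then $p_0(n) < \tfrac12 p(n)$.
   Context: For a partition $\pi$, let $\mathcal O(\pi)$ denote the number of odd parts of $\pi$ and $\pi'$ the conjugate partition. Let $p(n)$ be the number of partitions of $n$, and for $i=0,2$ let $p_i(n)$ be the number of partitions $\pi$ of $n$ with $\mathcal O(\pi)-\mathcal O(\pi')\equiv i\pmod 4$ (since $\mathcal O(\pi)\equiv\mathcal O(\pi')\equiv n \pmod 2$, one has $p(n)=p_0(n)+p_2(n)$). *)

theory Defs
  imports Complex_Main
begin

definition partitions :: "nat \<Rightarrow> nat list set" where
  "partitions n = {xs. sorted_wrt (\<ge>) xs \<and> 0 \<notin> set xs \<and> sum_list xs = n}"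

definition conj_part :: "nat list \<Rightarrow> nat list" where
  "conj_part xs = map (\<lambda>i. length (filter (\<lambda>x. i \<le> x) xs)) [1..<Suc (Max (insert 0 (set xs)))]"

definition num_odd :: "nat list \<Rightarrow> nat" where
  "num_odd xs = length (filter odd xs)"

definition p :: "nat \<Rightarrow> nat" where
  "p n = card (partitions n)"

definition p_i :: "int \<Rightarrow> nat \<Rightarrow> nat" where
  "p_i i n = card {xs \<in> partitions n.
      (int (num_odd xs) - int (num_odd (conj_part xs))) mod 4 = i mod 4}"

end

(*
  For a partition pi = (x_1 >= x_2 >= ...) let alt(pi) = [x_1 odd] - [x_2 odd] + [x_3 odd] - ...
  Adding a new largest part x turns O(pi') into x - O(pi'), and induction gives
  O(pi) - O(pi') = |pi| - alt(pi) (mod 4) together with alt(pi) = |pi| (mod 2).  So the theorem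
  says that more partitions of n have alt = 0, 1 (mod 4) than alt = 2, 3 (mod 4), i.e. that
  S(n) = sum over pi of eps(alt pi) is positive, where eps(c) = 1 for c = 0, 1 (mod 4) and -1 else.

  Splitting off the parts of maximal size M gives a q-Pascal recurrence, whence partitions with
  parts <= M and alt = c have generating function q^(2c^2-c) [M, M div 2 + c]_(q^2) / (q^2;q^2)_M,
  which tends to q^(2c^2-c) / (q^2;q^2)_inf^2.  Writing c = -2j or c = 2j + 1, eps(c) = (-1)^j and
  sum_c eps(c) q^(2c^2-c) = sum_j (-1)^j q^(8j^2+2j) + q sum_j (-1)^j q^(8j^2+6j), which by Jacobi's
  triple product is (q^6,q^10,q^16;q^16)_inf + q (q^2,q^14,q^16;q^16)_inf.  Divided by one factor
  (q^2;q^2)_inf each product becomes 1 / prod (1 - q^(2r)) over the remaining r and so has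
  nonnegative coefficients, while the other factor 1 / (q^2;q^2)_inf has all even coefficients >= 1.
  Hence S(n) >= 1.  All limits are replaced by finite products compared up to degree n.
*)
theory Submission
  imports
    Defs
    "HOL-Computational_Algebra.Formal_Power_Series"
    "HOL-Library.Groups_Big_Fun"
begin

unbundle fps_syntax

section \<open>Conjugation and the alternating count of odd parts\<close>

lemma num_odd_conj_part:
  assumes "\<forall>y\<in>set xs. y \<le> B"
  shows "num_odd (conj_part xs) = card ({1..B} \<inter> {i. odd (length (filter ((\<le>) i) xs))})"
proof -
  define m where "m = Max (insert 0 (set xs))"
  have "num_odd (conj_part xs) = card ({1..m} \<inter> {i. odd (length (filter ((\<le>) i) xs))})"
    unfolding m_def by (simp add: num_odd_def conj_part_def filter_map comp_def distinct_length_filter)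
      (auto intro!: arg_cong[where f = card])
  also have "{1..m} \<inter> {i. odd (length (filter ((\<le>) i) xs))}
           = {1..B} \<inter> {i. odd (length (filter ((\<le>) i) xs))}"
  proof -
    have "i \<le> m" if "odd (length (filter ((\<le>) i) xs))" for i
    proof (rule ccontr)
      assume "\<not> i \<le> m"
      then have "filter ((\<le>) i) xs = []"
        unfolding m_def filter_empty_conv by (meson List.finite_set Max_ge finite_insert insertCI le_trans)
      with that show False by simp
    qed
    moreover have "m \<le> B" unfolding m_def using assms by simp
    ultimately show ?thesis by auto (meson le_trans)
  qed
  finally show ?thesis .
qed

lemma num_odd_conj_part_Cons:
  assumes "\<forall>y\<in>set xs. y \<le> x"
  shows "num_odd (conj_part (x # xs)) + num_odd (conj_part xs) = x"
proof -
  let ?Odd = "{i. odd (length (filter ((\<le>) i) xs))}"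
  have "num_odd (conj_part (x # xs)) = card ({1..x} \<inter> {i. odd (length (filter ((\<le>) i) (x # xs)))})"
    using assms by (intro num_odd_conj_part) simp
  also have "{1..x} \<inter> {i. odd (length (filter ((\<le>) i) (x # xs)))} = {1..x} - ?Odd"
    by auto
  finally show ?thesis
    using num_odd_conj_part[OF assms] card_Int_Diff[of "{1..x}" ?Odd] by simp
qed

lemma num_odd_conj_part_Cons_int:
  assumes "sorted_wrt (\<ge>) (x # xs)"
  shows "int (num_odd (conj_part (x # xs))) = int x - int (num_odd (conj_part xs))"
  using num_odd_conj_part_Cons[of xs x] assms by simp

lemma num_odd_Cons: "num_odd (x # xs) = of_bool (odd x) + num_odd xs"
  by (simp add: num_odd_def)

fun alt_num_odd :: "nat list \<Rightarrow> int" where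
  "alt_num_odd [] = 0"
| "alt_num_odd (x # xs) = of_bool (odd x) - alt_num_odd xs"

lemma even_alt_num_odd_diff_sum: "even (alt_num_odd xs - int (sum_list xs))"
  by (induction xs) auto

lemma abs_alt_num_odd_le_length: "\<bar>alt_num_odd xs\<bar> \<le> int (length xs)"
  by (induction xs) auto

lemma even_num_odd_conj_part_diff_sum:
  "sorted_wrt (\<ge>) xs \<Longrightarrow> even (int (num_odd (conj_part xs)) - int (sum_list xs))"
proof (induction xs)
  case Nil
  then show ?case by (simp add: num_odd_def conj_part_def)
next
  case (Cons x xs)
  then show ?case by (simp add: num_odd_conj_part_Cons_int)
qed

lemma num_odd_diff_conj_part_mod_4:
  "sorted_wrt (\<ge>) xs \<Longrightarrow>
   (int (num_odd xs) - int (num_odd (conj_part xs))) mod 4 = (int (sum_list xs) - alt_num_odd xs) mod 4"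
proof (induction xs)
  case Nil
  then show ?case by (simp add: num_odd_def conj_part_def)
next
  case (Cons x xs)
  let ?d = "\<lambda>xs. (int (num_odd xs) - int (num_odd (conj_part xs))) - (int (sum_list xs) - alt_num_odd xs)"
  have "?d (x # xs) = ?d xs + 2 * (of_bool (odd x) - int x)
      + 2 * (int (num_odd (conj_part xs)) - alt_num_odd xs)"
    by (simp add: num_odd_conj_part_Cons_int[OF Cons.prems] num_odd_Cons)
  moreover have "4 dvd ?d xs"
    using Cons by (simp add: mod_eq_dvd_iff)
  moreover have "even (of_bool (odd x) - int x)"
    by simp
  moreover have "even (int (num_odd (conj_part xs)) - alt_num_odd xs)"
    using even_num_odd_conj_part_diff_sum[of xs] even_alt_num_odd_diff_sum[of xs] Cons.prems
    by simp
  ultimately have "4 dvd ?d (x # xs)"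
    by presburger
  then show ?case
    by (simp add: mod_eq_dvd_iff)
qed

lemma mod_4_diff_eq_0_iff:
  fixes a m :: int
  assumes "even (a - m)"
  shows "(m - a) mod 4 = 0 \<longleftrightarrow> (a mod 4 \<in> {0, 1} \<longleftrightarrow> m mod 4 \<in> {0, 1})"
  using assms unfolding insert_iff empty_iff by presburger

lemma p_i_0_eq_card:
  "p_i 0 n = card {xs \<in> partitions n. alt_num_odd xs mod 4 \<in> {0, 1} \<longleftrightarrow> int n mod 4 \<in> {0, 1}}"
proof -
  have "(int (num_odd xs) - int (num_odd (conj_part xs))) mod 4 = 0
        \<longleftrightarrow> (alt_num_odd xs mod 4 \<in> {0, 1} \<longleftrightarrow> int n mod 4 \<in> {0, 1})"
    if "xs \<in> partitions n" for xs
  proof -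
    from that have "sorted_wrt (\<ge>) xs" "sum_list xs = n"
      by (simp_all add: partitions_def)
    then show ?thesis
      using num_odd_diff_conj_part_mod_4[of xs] even_alt_num_odd_diff_sum[of xs] mod_4_diff_eq_0_iff
      by simp
  qed
  then show ?thesis
    unfolding p_i_def by (intro arg_cong[where f = card] Collect_cong conj_cong refl) simp_all
qed

section \<open>Partitions with bounded parts and given alternating count\<close>

lemma length_le_sum_list: "0 \<notin> set xs \<Longrightarrow> length xs \<le> sum_list xs"
  by (induction xs) (auto simp: Suc_le_eq)

lemma partition_parts_le: "xs \<in> partitions n \<Longrightarrow> x \<in> set xs \<Longrightarrow> x \<le> n"
  unfolding partitions_def using member_le_sum_list by fastforce

lemma finite_partitions: "finite (partitions n)"
proof (rule finite_subset)
  show "partitions n \<subseteq> {xs. set xs \<subseteq> {..n} \<and> length xs \<le> n}"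
  proof
    fix xs assume xs: "xs \<in> partitions n"
    then have "length xs \<le> n"
      using length_le_sum_list[of xs] by (simp add: partitions_def)
    with xs show "xs \<in> {xs. set xs \<subseteq> {..n} \<and> length xs \<le> n}"
      using partition_parts_le by auto
  qed
  show "finite {xs. set xs \<subseteq> {..n} \<and> length xs \<le> n}"
    by (rule finite_lists_length_le) simp
qed

definition alt_partitions :: "nat \<Rightarrow> nat \<Rightarrow> int \<Rightarrow> nat list set" where
  "alt_partitions M N c = {xs \<in> partitions N. (\<forall>x\<in>set xs. x \<le> M) \<and> alt_num_odd xs = c}"

lemma finite_alt_partitions: "finite (alt_partitions M N c)"
  unfolding alt_partitions_def using finite_partitions by simp

lemma alt_partitions_0: "alt_partitions 0 N c = (if N = 0 \<and> c = 0 then {[]} else {})"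
proof -
  have "xs \<in> alt_partitions 0 N c \<longleftrightarrow> xs = [] \<and> N = 0 \<and> c = 0" for xs
    by (cases xs) (auto simp: alt_partitions_def partitions_def)
  then show ?thesis
    by auto
qed

lemma alt_partitions_Suc:
  assumes "Suc M \<le> N"
  shows "alt_partitions (Suc M) N c
       = alt_partitions M N c \<union> (Cons (Suc M)) ` alt_partitions (Suc M) (N - Suc M) (of_bool (odd (Suc M)) - c)"
    (is "?L = ?A \<union> ?B")
proof (intro equalityI subsetI)
  fix xs assume xs: "xs \<in> ?L"
  show "xs \<in> ?A \<union> ?B"
  proof (cases "Suc M \<in> set xs")
    case False
    with xs have "\<forall>x\<in>set xs. x \<le> M"
      unfolding alt_partitions_def by (metis (mono_tags, lifting) le_SucE mem_Collect_eq)
    with xs show ?thesis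
      by (simp add: alt_partitions_def)
  next
    case True
    then obtain y l where xs_eq: "xs = y # l"
      by (cases xs) auto
    with xs True have "y = Suc M"
      by (auto simp: alt_partitions_def partitions_def)
    with xs xs_eq assms have "l \<in> alt_partitions (Suc M) (N - Suc M) (of_bool (odd (Suc M)) - c)"
      by (auto simp: alt_partitions_def partitions_def)
    with xs_eq \<open>y = Suc M\<close> show ?thesis
      by simp
  qed
next
  fix xs assume "xs \<in> ?A \<union> ?B"
  then show "xs \<in> ?L"
    using assms by (auto simp: alt_partitions_def partitions_def)
qed

lemma card_alt_partitions_Suc:
  "card (alt_partitions (Suc M) N c) = card (alt_partitions M N c)
     + (if Suc M \<le> N then card (alt_partitions (Suc M) (N - Suc M) (of_bool (odd (Suc M)) - c)) else 0)"
proof (cases "Suc M \<le> N")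
  case True
  have "Suc M # l \<notin> alt_partitions M N c" for l
    by (simp add: alt_partitions_def)
  then have "alt_partitions M N c \<inter> (Cons (Suc M)) ` alt_partitions (Suc M) (N - Suc M) (of_bool (odd (Suc M)) - c) = {}"
    by blast
  with True show ?thesis
    by (simp add: alt_partitions_Suc card_Un_disjoint finite_alt_partitions card_image)
next
  case False
  then have "x \<le> M" if "xs \<in> partitions N" "x \<in> set xs" for xs x
    using partition_parts_le[OF that] by simp
  then have "alt_partitions (Suc M) N c = alt_partitions M N c"
    by (fastforce simp: alt_partitions_def)
  with False show ?thesis by simp
qed

section \<open>Gaussian binomial coefficients\<close>

definition qpoch :: "'a::comm_ring_1 \<Rightarrow> nat \<Rightarrow> 'a" where
  "qpoch Q N = (\<Prod>i\<in>{1..N}. 1 - Q ^ i)"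

lemma qpoch_0 [simp]: "qpoch Q 0 = 1"
  by (simp add: qpoch_def)

lemma qpoch_Suc: "qpoch Q (Suc N) = qpoch Q N * (1 - Q ^ Suc N)"
  by (simp add: qpoch_def prod.atLeast1_atMost_eq atLeastAtMostSuc_conv mult.commute)

(* The Gaussian binomial coefficient with an integer lower index, so that it vanishes outside 0..N. *)
primrec qbinom :: "'a::comm_ring_1 \<Rightarrow> nat \<Rightarrow> int \<Rightarrow> 'a" where
  "qbinom Q 0 k = of_bool (k = 0)"
| "qbinom Q (Suc N) k = qbinom Q N (k - 1) + Q ^ nat k * qbinom Q N k"

lemma qbinom_eq_0: "k < 0 \<or> int N < k \<Longrightarrow> qbinom Q N k = 0"
  by (induction N arbitrary: k) auto

lemma qbinom_nonzeroD: "qbinom Q N k \<noteq> 0 \<Longrightarrow> 0 \<le> k \<and> k \<le> int N"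
  by (meson not_le qbinom_eq_0)

lemma qbinom_0_right [simp]: "qbinom Q N 0 = 1"
  by (induction N) (simp_all add: qbinom_eq_0)

lemma qbinom_mult_qpoch:
  "k \<le> N \<Longrightarrow> qbinom Q N (int k) * qpoch Q k * qpoch Q (N - k) = qpoch Q N"
proof (induction N arbitrary: k)
  case 0
  then show ?case by simp
next
  case (Suc N)
  show ?case
  proof (cases k)
    case 0
    then show ?thesis by simp
  next
    case (Suc k')
    have "qbinom Q N (int k') * qpoch Q k * qpoch Q (Suc N - k)
        = (qbinom Q N (int k') * qpoch Q k' * qpoch Q (N - k')) * (1 - Q ^ k)"
      using \<open>k = Suc k'\<close> by (simp add: qpoch_Suc mult_ac)
    also have "\<dots> = qpoch Q N * (1 - Q ^ k)"
      using Suc.IH[of k'] Suc.prems \<open>k = Suc k'\<close> by simp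
    finally have left: "qbinom Q N (int k') * qpoch Q k * qpoch Q (Suc N - k) = qpoch Q N * (1 - Q ^ k)" .
    have right: "Q ^ k * qbinom Q N (int k) * qpoch Q k * qpoch Q (Suc N - k)
               = (Q ^ k - Q ^ Suc N) * qpoch Q N"
    proof (cases "k \<le> N")
      case True
      then have "Suc N - k = Suc (N - k)" "k + Suc (N - k) = Suc N"
        by simp_all
      then have "Q ^ k * qbinom Q N (int k) * qpoch Q k * qpoch Q (Suc N - k)
          = Q ^ k * (qbinom Q N (int k) * qpoch Q k * qpoch Q (N - k)) * (1 - Q ^ Suc (N - k))"
        by (simp add: qpoch_Suc mult_ac)
      also have "\<dots> = (Q ^ k - Q ^ k * Q ^ Suc (N - k)) * qpoch Q N"
        using Suc.IH[OF True] by (simp add: algebra_simps)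
      also have "Q ^ k * Q ^ Suc (N - k) = Q ^ Suc N"
        unfolding power_add[symmetric] \<open>k + Suc (N - k) = Suc N\<close> ..
      finally show ?thesis .
    next
      case False
      with Suc.prems have "k = Suc N" by simp
      then show ?thesis by (simp add: qbinom_eq_0)
    qed
    have "int k - 1 = int k'"
      using \<open>k = Suc k'\<close> by simp
    then have "qbinom Q (Suc N) (int k) = qbinom Q N (int k') + Q ^ k * qbinom Q N (int k)"
      by (metis nat_int qbinom.simps(2))
    then have "qbinom Q (Suc N) (int k) * qpoch Q k * qpoch Q (Suc N - k)
        = qbinom Q N (int k') * qpoch Q k * qpoch Q (Suc N - k)
          + Q ^ k * qbinom Q N (int k) * qpoch Q k * qpoch Q (Suc N - k)"
      by (simp only: distrib_right mult.assoc)
    also have "\<dots> = qpoch Q N * (1 - Q ^ k) + (Q ^ k - Q ^ Suc N) * qpoch Q N"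
      unfolding left right ..
    also have "\<dots> = qpoch Q (Suc N)"
      by (simp add: qpoch_Suc algebra_simps)
    finally show ?thesis .
  qed
qed

lemma qpoch_le_nonzero:
  fixes Q :: "'a::idom"
  assumes "qpoch Q N \<noteq> 0" "k \<le> N"
  shows "qpoch Q k \<noteq> 0"
  using qbinom_mult_qpoch[OF assms(2), of Q] assms(1) by auto

lemma qbinom_symmetric:
  fixes Q :: "'a::idom"
  assumes "qpoch Q N \<noteq> 0"
  shows "qbinom Q N (int N - k) = qbinom Q N k"
proof (cases "0 \<le> k \<and> k \<le> int N")
  case True
  then obtain m where m: "k = int m" "m \<le> N"
    by (metis nonneg_int_cases of_nat_le_iff)
  have "qbinom Q N (int (N - m)) * (qpoch Q (N - m) * qpoch Q m)
      = qbinom Q N (int m) * (qpoch Q (N - m) * qpoch Q m)"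
    using qbinom_mult_qpoch[of "N - m" N Q] qbinom_mult_qpoch[OF m(2), of Q] m(2)
    by (simp add: algebra_simps)
  moreover have "qpoch Q (N - m) * qpoch Q m \<noteq> 0"
    using qpoch_le_nonzero[OF assms] m(2) by simp
  ultimately show ?thesis
    using m by simp
next
  case False
  then show ?thesis by (auto simp: qbinom_eq_0)
qed

lemma qbinom_Suc':
  fixes Q :: "'a::idom"
  assumes "qpoch Q (Suc N) \<noteq> 0"
  shows "qbinom Q (Suc N) k = Q ^ nat (int (Suc N) - k) * qbinom Q N (k - 1) + qbinom Q N k"
proof -
  have N: "qpoch Q N \<noteq> 0"
    using qpoch_le_nonzero[OF assms] by simp
  have "qbinom Q (Suc N) k = qbinom Q (Suc N) (int (Suc N) - k)"
    using qbinom_symmetric[OF assms] by simp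
  also have "\<dots> = qbinom Q N (int N - k) + Q ^ nat (int (Suc N) - k) * qbinom Q N (int N - (k - 1))"
    by (simp add: algebra_simps)
  also have "\<dots> = qbinom Q N k + Q ^ nat (int (Suc N) - k) * qbinom Q N (k - 1)"
    by (simp only: qbinom_symmetric[OF N])
  finally show ?thesis
    by (simp add: algebra_simps)
qed

lemma qbinom_Suc_Suc:
  fixes Q :: "'a::idom"
  assumes "qpoch Q (Suc (Suc N)) \<noteq> 0"
  shows "qbinom Q (Suc (Suc N)) (k + 1)
       = (1 + Q ^ Suc N) * qbinom Q N k + Q ^ nat (int (Suc N) - k) * qbinom Q N (k - 1)
         + Q ^ nat (k + 1) * qbinom Q N (k + 1)"
proof -
  have Suc: "qpoch Q (Suc N) \<noteq> 0"
    using qpoch_le_nonzero[OF assms] by simp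
  have "Q ^ nat (k + 1) * Q ^ nat (int N - k) * qbinom Q N k = Q ^ Suc N * qbinom Q N k"
  proof (cases "0 \<le> k \<and> k \<le> int N")
    case True
    then have "nat (k + 1) + nat (int N - k) = Suc N" by linarith
    then show ?thesis by (metis power_add)
  next
    case False
    then show ?thesis by (auto simp: qbinom_eq_0)
  qed
  then show ?thesis
    using qbinom_Suc'[OF Suc, of k] qbinom_Suc'[OF Suc, of "k + 1"]
    by (simp add: algebra_simps)
qed

lemma qpoch_fps_nth_0: "Q $ 0 = 0 \<Longrightarrow> qpoch Q N $ 0 = 1"
  by (induction N) (simp_all add: qpoch_Suc)

lemma qpoch_fps_nonzero: "Q $ 0 = 0 \<Longrightarrow> qpoch Q N \<noteq> (0 :: 'a::comm_ring_1 fps)"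
  using qpoch_fps_nth_0[of Q N] by auto

section \<open>A finite Jacobi triple product\<close>

lemma finite_support_subset_Icc:
  "(\<And>j. f j \<noteq> 0 \<Longrightarrow> lo \<le> j \<and> j \<le> hi) \<Longrightarrow> finite {j::int. f j \<noteq> 0}"
  by (rule finite_subset[of _ "{lo..hi}"]) auto

lemma quadratic_nonneg_int:
  assumes "b \<le> a"
  shows "0 \<le> int a * j\<^sup>2 + int b * j"
proof -
  have "0 \<le> j * (j + 1)"
    by (cases "0 \<le> j") (simp_all add: mult_nonpos_nonpos)
  then have "0 \<le> (int a - int b) * j\<^sup>2 + int b * (j * (j + 1))"
    using assms by simp
  then show ?thesis
    by (simp add: algebra_simps power2_eq_square)
qed

lemma minus_one_power_nat_abs_plus_1:
  "(-1) ^ nat \<bar>j + 1\<bar> = - ((-1) ^ nat \<bar>j\<bar> :: 'a::comm_ring_1)"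
  by (simp add: minus_one_power_iff even_nat_iff)

lemma minus_one_power_nat_abs_minus_1:
  "(-1) ^ nat \<bar>j - 1\<bar> = - ((-1) ^ nat \<bar>j\<bar> :: 'a::comm_ring_1)"
  by (simp add: minus_one_power_iff even_nat_iff)

lemma Sum_any_shift_int: "Sum_any (\<lambda>j. f (j + d)) = Sum_any (f :: int \<Rightarrow> 'a::comm_monoid_add)"
  by (rule Sum_any.reindex_cong[where l = "\<lambda>j. j + d", symmetric])
    (auto intro!: bij_betwI[where g = "\<lambda>j. j - d"])

lemma jacobi_monomial_shift:
  fixes x :: "'a::comm_ring_1"
  assumes "b \<le> a" "- int n \<le> j" "j \<le> int n"
  defines "m i \<equiv> (-1) ^ nat \<bar>i\<bar> * x ^ nat (int a * i\<^sup>2 + int b * i)"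
  shows "m (j + 1) * (x ^ (2 * a)) ^ nat (int n - j) = - (x ^ (a + b + 2 * a * n) * m j)"
    and "m (j - 1) * (x ^ (2 * a)) ^ nat (int n + j) = - (x ^ (a - b + 2 * a * n) * m j)"
proof -
  define e where "e i = nat (int a * i\<^sup>2 + int b * i)" for i
  have int_e: "int (e i) = int a * i\<^sup>2 + int b * i" for i
    unfolding e_def using quadratic_nonneg_int[OF assms(1)] by simp
  have "int (e (j + 1) + 2 * a * nat (int n - j)) = int (e j + (a + b + 2 * a * n))"
    "int (e (j - 1) + 2 * a * nat (int n + j)) = int (e j + (a - b + 2 * a * n))"
    using assms(1-3) by (simp_all add: int_e algebra_simps power2_eq_square of_nat_diff)
  then have "x ^ e (j + 1) * (x ^ (2 * a)) ^ nat (int n - j) = x ^ (a + b + 2 * a * n) * x ^ e j"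
    "x ^ e (j - 1) * (x ^ (2 * a)) ^ nat (int n + j) = x ^ (a - b + 2 * a * n) * x ^ e j"
    unfolding power_mult[symmetric] power_add[symmetric] of_nat_eq_iff by (simp_all add: add.commute)
  moreover have "m (j + 1) * (x ^ (2 * a)) ^ nat (int n - j)
      = - ((-1) ^ nat \<bar>j\<bar> * (x ^ e (j + 1) * (x ^ (2 * a)) ^ nat (int n - j)))"
    "m (j - 1) * (x ^ (2 * a)) ^ nat (int n + j)
      = - ((-1) ^ nat \<bar>j\<bar> * (x ^ e (j - 1) * (x ^ (2 * a)) ^ nat (int n + j)))"
    unfolding m_def e_def minus_one_power_nat_abs_plus_1 minus_one_power_nat_abs_minus_1
    by (simp_all add: mult.assoc)
  ultimately show "m (j + 1) * (x ^ (2 * a)) ^ nat (int n - j) = - (x ^ (a + b + 2 * a * n) * m j)"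
    and "m (j - 1) * (x ^ (2 * a)) ^ nat (int n + j) = - (x ^ (a - b + 2 * a * n) * m j)"
    by (simp_all add: m_def e_def mult.left_commute)
qed

lemma jacobi_triple_product_step:
  fixes x :: "'a::idom fps"
  assumes x: "x $ 0 = 0" and "b \<le> a" "1 \<le> a"
  defines "m j \<equiv> (-1) ^ nat \<bar>j\<bar> * x ^ nat (int a * j\<^sup>2 + int b * j)"
  defines "F n \<equiv> Sum_any (\<lambda>j. m j * qbinom (x ^ (2 * a)) (2 * n) (int n + j))"
  shows "F (Suc n) = F n * ((1 - x ^ (a - b + 2 * a * n)) * (1 - x ^ (a + b + 2 * a * n)))"
proof -
  define Q where "Q = x ^ (2 * a)"
  define \<alpha> where "\<alpha> = a - b + 2 * a * n"
  define \<beta> where "\<beta> = a + b + 2 * a * n"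
  define G where "G k = qbinom Q (2 * n) k" for k
  define A where "A j = m j * ((1 + Q ^ Suc (2 * n)) * G (int n + j))" for j
  define B where "B j = m j * (Q ^ nat (int (Suc (2 * n)) - (int n + j)) * G (int n + j - 1))" for j
  define C where "C j = m j * (Q ^ nat (int n + j + 1) * G (int n + j + 1))" for j
  have Q0: "qpoch Q N \<noteq> 0" for N
    using x \<open>1 \<le> a\<close> by (intro qpoch_fps_nonzero) (simp add: Q_def fps_nth_power_0)
  have G_nonzero: "-int n \<le> j \<and> j \<le> int n" if "G (int n + j) \<noteq> 0" for j
    using qbinom_nonzeroD[OF that[unfolded G_def]] by simp
  have fin: "finite {j. m j * G (int n + j) \<noteq> 0}" "finite {j. A j \<noteq> 0}"
    "finite {j. B j \<noteq> 0}" "finite {j. C j \<noteq> 0}"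
    by (rule finite_support_subset_Icc[of _ "- int n - 1" "int n + 1"];
        auto simp: A_def B_def C_def G_def dest!: qbinom_nonzeroD)+
  have F: "F n = Sum_any (\<lambda>j. m j * G (int n + j))"
    unfolding F_def G_def Q_def ..
  have "F (Suc n) = Sum_any (\<lambda>j. A j + B j + C j)"
    unfolding F_def
  proof (rule Sum_any.cong)
    fix j
    have "qbinom Q (2 * Suc n) (int (Suc n) + j) = qbinom Q (Suc (Suc (2 * n))) (int n + j + 1)"
      by (simp add: algebra_simps)
    then show "m j * qbinom (x ^ (2 * a)) (2 * Suc n) (int (Suc n) + j) = A j + B j + C j"
      unfolding A_def B_def C_def G_def Q_def[symmetric] qbinom_Suc_Suc[OF Q0]
      by (simp add: algebra_simps)
  qed
  also have "\<dots> = Sum_any A + Sum_any B + Sum_any C"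
  proof -
    have "finite {j. A j + B j \<noteq> 0}"
      by (rule finite_subset[OF _ finite_UnI[OF fin(2,3)]]) auto
    then show ?thesis
      using fin by (simp add: Sum_any.distrib)
  qed
  also have "Sum_any A = (1 + x ^ \<alpha> * x ^ \<beta>) * F n"
  proof -
    have "Q ^ Suc (2 * n) = x ^ \<alpha> * x ^ \<beta>"
      unfolding Q_def \<alpha>_def \<beta>_def power_mult[symmetric] power_add[symmetric]
      using \<open>b \<le> a\<close> by (simp add: algebra_simps)
    then show ?thesis
      unfolding F Sum_any_right_distrib[OF fin(1)] A_def by (simp add: mult_ac)
  qed
  also have "Sum_any B = - (x ^ \<beta>) * F n"
  proof -
    have "B (j + 1) = - (x ^ \<beta>) * (m j * G (int n + j))" for j
      using jacobi_monomial_shift(1)[OF \<open>b \<le> a\<close>, of n j x] G_nonzero[of j]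
      by (cases "G (int n + j) = 0") (simp_all add: B_def m_def Q_def \<beta>_def mult.assoc[symmetric])
    then show ?thesis
      unfolding F Sum_any_right_distrib[OF fin(1)] Sum_any_shift_int[of B 1, symmetric] by simp
  qed
  also have "Sum_any C = - (x ^ \<alpha>) * F n"
  proof -
    have "C (j - 1) = - (x ^ \<alpha>) * (m j * G (int n + j))" for j
      using jacobi_monomial_shift(2)[OF \<open>b \<le> a\<close>, of n j x] G_nonzero[of j]
      by (cases "G (int n + j) = 0") (simp_all add: C_def m_def Q_def \<alpha>_def mult.assoc[symmetric])
    then show ?thesis
      unfolding F Sum_any_right_distrib[OF fin(1)] Sum_any_shift_int[of C "- 1", symmetric] by simp
  qed
  finally show ?thesis
    unfolding \<alpha>_def[symmetric] \<beta>_def[symmetric] by (simp add: algebra_simps)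
qed

(* A finite form of Jacobi's triple product identity; the limit n \<rightarrow> \<infinity> is the usual one. *)
theorem jacobi_triple_product_finite:
  fixes x :: "'a::idom fps"
  assumes "x $ 0 = 0" "b \<le> a" "1 \<le> a"
  shows "(\<Sum>j=-int n..int n. (-1) ^ nat \<bar>j\<bar> * x ^ nat (int a * j\<^sup>2 + int b * j)
            * qbinom (x ^ (2 * a)) (2 * n) (int n + j))
       = (\<Prod>i<n. (1 - x ^ (a - b + 2 * a * i)) * (1 - x ^ (a + b + 2 * a * i)))"
proof -
  have "(\<Sum>j=-int n..int n. (-1) ^ nat \<bar>j\<bar> * x ^ nat (int a * j\<^sup>2 + int b * j)
            * qbinom (x ^ (2 * a)) (2 * n) (int n + j))
      = Sum_any (\<lambda>j. (-1) ^ nat \<bar>j\<bar> * x ^ nat (int a * j\<^sup>2 + int b * j)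
            * qbinom (x ^ (2 * a)) (2 * n) (int n + j))"
    by (rule Sum_any.expand_superset[symmetric]) (auto dest!: qbinom_nonzeroD)
  also have "\<dots> = (\<Prod>i<n. (1 - x ^ (a - b + 2 * a * i)) * (1 - x ^ (a + b + 2 * a * i)))"
  proof (induction n)
    case 0
    show ?case
      by (subst Sum_any.expand_superset[of "{0}"]) auto
  next
    case (Suc n)
    show ?case
      unfolding jacobi_triple_product_step[OF assms] Suc.IH by (simp only: prod.lessThan_Suc)
  qed
  finally show ?thesis .
qed

section \<open>The generating function of partitions with given alternating count\<close>

definition alt_partition_series :: "nat \<Rightarrow> int \<Rightarrow> 'a::comm_semiring_1 fps" where
  "alt_partition_series M c = Abs_fps (\<lambda>N. of_nat (card (alt_partitions M N c)))"

lemma alt_partition_series_Suc: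
  "alt_partition_series (Suc M) c
   = alt_partition_series M c + fps_X ^ Suc M * alt_partition_series (Suc M) (of_bool (odd (Suc M)) - c)"
proof (rule fps_ext)
  fix N
  show "alt_partition_series (Suc M) c $ N = (alt_partition_series M c
      + fps_X ^ Suc M * alt_partition_series (Suc M) (of_bool (odd (Suc M)) - c)) $ N"
    using card_alt_partitions_Suc[of M N c]
    by (simp add: alt_partition_series_def fps_X_power_mult_nth not_less del: power_Suc)
qed

lemma alt_partition_series_recurrence:
  fixes M :: nat and c :: int
  defines "e \<equiv> of_bool (odd (Suc M)) :: int"
  shows "(1 - fps_X ^ (2 * Suc M)) * alt_partition_series (Suc M) c
       = alt_partition_series M c + fps_X ^ Suc M * (alt_partition_series M (e - c) :: 'a::comm_ring_1 fps)"
proof -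
  let ?P = "alt_partition_series :: nat \<Rightarrow> int \<Rightarrow> 'a fps"
  have "?P (Suc M) c = ?P M c + fps_X ^ Suc M * ?P (Suc M) (e - c)"
    unfolding e_def by (rule alt_partition_series_Suc)
  also have "?P (Suc M) (e - c) = ?P M (e - c) + fps_X ^ Suc M * ?P (Suc M) c"
    using alt_partition_series_Suc[of M "e - c"] unfolding e_def by simp
  finally have "?P (Suc M) c = ?P M c + fps_X ^ Suc M * ?P M (e - c) + fps_X ^ (2 * Suc M) * ?P (Suc M) c"
    unfolding mult_2 power_add by (simp add: algebra_simps)
  then show ?thesis
    by (simp add: algebra_simps)
qed

lemma alt_partition_series_0: "alt_partition_series 0 c = of_bool (c = 0)"
  by (rule fps_ext) (simp add: alt_partition_series_def alt_partitions_0)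

lemma two_square_minus_nonneg: "0 \<le> 2 * c\<^sup>2 - (c::int)"
  using quadratic_nonneg_int[of 1 2 "- c"] by simp

lemma power_mult_eq_if_nonzero:
  fixes y g :: "'a::comm_semiring_1"
  assumes "g \<noteq> 0 \<Longrightarrow> i + j = k + l"
  shows "y ^ i * (y ^ j * g) = y ^ k * (y ^ l * g)"
  using assms by (cases "g = 0") (simp_all add: mult.assoc[symmetric] flip: power_add)

lemma qbinom_X2_step_even:
  fixes K :: nat and c :: int
  defines "x \<equiv> fps_X ^ 2 :: 'a::idom fps" and "T d \<equiv> nat (2 * d\<^sup>2 - d)"
  shows "fps_X ^ T c * qbinom x (2 * K) (int K + c)
           + fps_X ^ Suc (2 * K) * (fps_X ^ T (1 - c) * qbinom x (2 * K) (int K + (1 - c)))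
       = fps_X ^ T c * qbinom x (Suc (2 * K)) (int K + c)"
proof -
  have x: "qpoch x N \<noteq> 0" for N
    unfolding x_def by (rule qpoch_fps_nonzero) simp
  have sym: "qbinom x (2 * K) (int K + (1 - c)) = qbinom x (2 * K) (int K + c - 1)"
    using qbinom_symmetric[OF x, of "2 * K" "int K + c - 1"] by simp
  have "fps_X ^ Suc (2 * K) * (fps_X ^ T (1 - c) * qbinom x (2 * K) (int K + c - 1))
      = fps_X ^ T c * (fps_X ^ (2 * nat (int K + 1 - c)) * qbinom x (2 * K) (int K + c - 1))"
  proof (rule power_mult_eq_if_nonzero)
    assume "qbinom x (2 * K) (int K + c - 1) \<noteq> 0"
    then have "int K + c - 1 \<le> 2 * int K"
      by (auto dest: qbinom_nonzeroD)
    then have "int (Suc (2 * K) + T (1 - c)) = int (T c + 2 * nat (int K + 1 - c))"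
      using two_square_minus_nonneg[of c] two_square_minus_nonneg[of "1 - c"]
      by (simp add: T_def power2_eq_square algebra_simps)
    then show "Suc (2 * K) + T (1 - c) = T c + 2 * nat (int K + 1 - c)"
      by (simp only: of_nat_eq_iff)
  qed
  then show ?thesis
    unfolding sym qbinom_Suc'[OF x] by (simp add: x_def power_mult algebra_simps)
qed

lemma qbinom_X2_step_odd:
  fixes K :: nat and c :: int
  defines "x \<equiv> fps_X ^ 2 :: 'a::idom fps" and "T d \<equiv> nat (2 * d\<^sup>2 - d)"
  shows "fps_X ^ T c * qbinom x (Suc (2 * K)) (int K + c)
           + fps_X ^ Suc (Suc (2 * K)) * (fps_X ^ T (- c) * qbinom x (Suc (2 * K)) (int K - c))
       = fps_X ^ T c * qbinom x (Suc (Suc (2 * K))) (int K + 1 + c)"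
proof -
  have x: "qpoch x N \<noteq> 0" for N
    unfolding x_def by (rule qpoch_fps_nonzero) simp
  have sym: "qbinom x (Suc (2 * K)) (int K - c) = qbinom x (Suc (2 * K)) (int K + c + 1)"
    using qbinom_symmetric[OF x, of "Suc (2 * K)" "int K + c + 1"] by simp
  have "fps_X ^ Suc (Suc (2 * K)) * (fps_X ^ T (- c) * qbinom x (Suc (2 * K)) (int K + c + 1))
      = fps_X ^ T c * (fps_X ^ (2 * nat (int K + c + 1)) * qbinom x (Suc (2 * K)) (int K + c + 1))"
  proof (rule power_mult_eq_if_nonzero)
    assume "qbinom x (Suc (2 * K)) (int K + c + 1) \<noteq> 0"
    then have "0 \<le> int K + c + 1"
      by (blast dest: qbinom_nonzeroD)
    then have "int (Suc (Suc (2 * K)) + T (- c)) = int (T c + 2 * nat (int K + c + 1))"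
      using two_square_minus_nonneg[of c] two_square_minus_nonneg[of "- c"]
      by (simp add: T_def power2_eq_square algebra_simps)
    then show "Suc (Suc (2 * K)) + T (- c) = T c + 2 * nat (int K + c + 1)"
      by (simp only: of_nat_eq_iff)
  qed
  then show ?thesis
    unfolding sym by (simp add: x_def power_mult algebra_simps)
qed

(* In the limit M \<rightarrow> \<infinity> the series of partitions with alternating count c is q^(2c^2-c) / (q^2;q^2)_inf^2. *)
lemma alt_partition_series_mult_qpoch:
  "alt_partition_series M c * qpoch (fps_X ^ 2) M
   = (fps_X ^ nat (2 * c\<^sup>2 - c) * qbinom (fps_X ^ 2) M (int (M div 2) + c) :: 'a::idom fps)"
proof (induction M arbitrary: c)
  case 0
  then show ?case by (simp add: alt_partition_series_0)
next
  case (Suc M)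
  let ?P = "alt_partition_series :: nat \<Rightarrow> int \<Rightarrow> 'a fps"
  let ?x = "fps_X ^ 2 :: 'a fps"
  let ?e = "of_bool (odd (Suc M)) :: int"
  have "?P (Suc M) c * qpoch ?x (Suc M) = ((1 - fps_X ^ (2 * Suc M)) * ?P (Suc M) c) * qpoch ?x M"
    unfolding qpoch_Suc power_mult by (simp only: mult_ac)
  also have "\<dots> = ?P M c * qpoch ?x M + fps_X ^ Suc M * (?P M (?e - c) * qpoch ?x M)"
    unfolding alt_partition_series_recurrence by (simp only: distrib_right mult.assoc)
  also have "\<dots> = fps_X ^ nat (2 * c\<^sup>2 - c) * qbinom ?x M (int (M div 2) + c)
      + fps_X ^ Suc M * (fps_X ^ nat (2 * (?e - c)\<^sup>2 - (?e - c)) * qbinom ?x M (int (M div 2) + (?e - c)))"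
    unfolding Suc.IH ..
  also have "\<dots> = fps_X ^ nat (2 * c\<^sup>2 - c) * qbinom ?x (Suc M) (int (Suc M div 2) + c)"
  proof (cases "even M")
    case True
    then obtain K where "M = 2 * K" ..
    then show ?thesis
      using qbinom_X2_step_even[of c K] by simp
  next
    case False
    then obtain K where "M = Suc (2 * K)"
      by (metis oddE Suc_eq_plus1)
    then show ?thesis
      using qbinom_X2_step_odd[of c K] by (simp add: algebra_simps)
  qed
  finally show ?case .
qed

lemma sum_partitions_eq_nth_alt_partition_series:
  fixes h :: "int \<Rightarrow> 'a::comm_ring_1"
  assumes "n \<le> M" "finite C" "{-int n..int n} \<subseteq> C"
  shows "(\<Sum>xs\<in>partitions n. h (alt_num_odd xs))
       = (\<Sum>c\<in>C. fps_const (h c) * alt_partition_series M c) $ n"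
proof -
  have parts: "alt_partitions M n c = {xs \<in> partitions n. alt_num_odd xs = c}" for c
    using assms(1) by (auto simp: alt_partitions_def dest: partition_parts_le)
  have "alt_num_odd ` partitions n \<subseteq> C"
  proof
    fix c assume "c \<in> alt_num_odd ` partitions n"
    then obtain xs where xs: "xs \<in> partitions n" "c = alt_num_odd xs" by auto
    then have "length xs \<le> n"
      using length_le_sum_list[of xs] by (simp add: partitions_def)
    with xs abs_alt_num_odd_le_length[of xs] have "c \<in> {-int n..int n}"
      by auto
    with assms(3) show "c \<in> C" ..
  qed
  then have "(\<Sum>xs\<in>partitions n. h (alt_num_odd xs))
      = (\<Sum>c\<in>C. \<Sum>xs\<in>{xs \<in> partitions n. alt_num_odd xs = c}. h (alt_num_odd xs))"
    using finite_partitions assms(2) by (intro sum.group[symmetric]) auto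
  also have "\<dots> = (\<Sum>c\<in>C. h c * of_nat (card (alt_partitions M n c)))"
    unfolding parts by (intro sum.cong) (simp_all add: mult.commute)
  finally show ?thesis
    by (simp add: fps_sum_nth alt_partition_series_def)
qed

section \<open>Agreement of power series up to a given degree\<close>

definition fps_eq_upto :: "nat \<Rightarrow> 'a::zero fps \<Rightarrow> 'a fps \<Rightarrow> bool" where
  "fps_eq_upto n f g \<longleftrightarrow> (\<forall>k\<le>n. f $ k = g $ k)"

lemma fps_eq_upto_refl [simp]: "fps_eq_upto n f f"
  by (simp add: fps_eq_upto_def)

lemma fps_eq_upto_sym: "fps_eq_upto n f g \<Longrightarrow> fps_eq_upto n g f"
  by (simp add: fps_eq_upto_def)

lemma fps_eq_upto_trans [trans]: "fps_eq_upto n f g \<Longrightarrow> fps_eq_upto n g h \<Longrightarrow> fps_eq_upto n f h"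
  by (simp add: fps_eq_upto_def)

lemma fps_eq_upto_mono: "fps_eq_upto n f g \<Longrightarrow> m \<le> n \<Longrightarrow> fps_eq_upto m f g"
  by (simp add: fps_eq_upto_def)

lemma fps_eq_upto_add:
  "fps_eq_upto n f f' \<Longrightarrow> fps_eq_upto n g g' \<Longrightarrow> fps_eq_upto n (f + g) (f' + g')"
  by (simp add: fps_eq_upto_def)

lemma fps_eq_upto_mult:
  fixes f :: "'a::comm_semiring_1 fps"
  shows "fps_eq_upto n f f' \<Longrightarrow> fps_eq_upto n g g' \<Longrightarrow> fps_eq_upto n (f * g) (f' * g')"
  unfolding fps_eq_upto_def fps_mult_nth by (auto intro!: sum.cong)

lemma fps_eq_upto_sum:
  "(\<And>i. i \<in> A \<Longrightarrow> fps_eq_upto n (f i) (g i)) \<Longrightarrow> fps_eq_upto n (sum f A) (sum g A)"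
  unfolding fps_eq_upto_def fps_sum_nth by (auto intro!: sum.cong)

lemma fps_eq_upto_X_power_mult:
  fixes f :: "'a::comm_semiring_1 fps"
  assumes "t \<le> n \<Longrightarrow> fps_eq_upto (n - t) f g"
  shows "fps_eq_upto n (fps_X ^ t * f) (fps_X ^ t * g)"
  using assms unfolding fps_eq_upto_def fps_X_power_mult_nth by auto

lemma fps_eq_upto_inverse:
  fixes f :: "'a::field fps"
  assumes "fps_eq_upto n f g" "f $ 0 \<noteq> 0"
  shows "fps_eq_upto n (inverse f) (inverse g)"
proof -
  have g0: "g $ 0 \<noteq> 0"
    using assms by (simp add: fps_eq_upto_def)
  have "fps_eq_upto n (inverse f * g * inverse g) (inverse f * f * inverse g)"
    using fps_eq_upto_sym[OF assms(1)] by (intro fps_eq_upto_mult fps_eq_upto_refl)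
  moreover have "inverse f * g * inverse g = inverse f"
    using inverse_mult_eq_1'[OF g0] by (simp only: mult.assoc mult_1_right)
  moreover have "inverse f * f * inverse g = inverse g"
    using inverse_mult_eq_1[OF assms(2)] by (simp only: mult_1_left)
  ultimately show ?thesis
    by simp
qed

lemma fps_eq_upto_one_minus_X_power: "n < m \<Longrightarrow> fps_eq_upto n (1 - fps_X ^ m :: 'a::comm_ring_1 fps) 1"
  by (simp add: fps_eq_upto_def)

lemma qpoch_X_power_eq_upto:
  fixes s :: nat
  assumes "n < s * (min a b + 1)"
  shows "fps_eq_upto n (qpoch (fps_X ^ s :: 'a::comm_ring_1 fps) a) (qpoch (fps_X ^ s) b)"
proof -
  have *: "fps_eq_upto n (qpoch (fps_X ^ s :: 'a fps) b) (qpoch (fps_X ^ s) a)"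
    if "a \<le> b" "n < s * (a + 1)" for a b
    using that(1)
  proof (induction b)
    case 0
    then show ?case by simp
  next
    case (Suc b)
    show ?case
    proof (cases "a = Suc b")
      case False
      with Suc.prems have "a \<le> b" by simp
      moreover from this have "n < s * Suc b"
      proof -
        have "s * (a + 1) \<le> s * Suc b"
          using \<open>a \<le> b\<close> by simp
        then show ?thesis using that(2) by linarith
      qed
      ultimately have "fps_eq_upto n (qpoch (fps_X ^ s) b * (1 - fps_X ^ (s * Suc b))) (qpoch (fps_X ^ s :: 'a fps) a * 1)"
        by (intro fps_eq_upto_mult Suc.IH fps_eq_upto_one_minus_X_power)
      then show ?thesis
        by (simp only: qpoch_Suc power_mult mult_1_right)
    qed simp
  qed
  show ?thesis
  proof (cases "a \<le> b")
    case True
    with assms show ?thesis by (intro fps_eq_upto_sym[OF *]) simp_all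
  next
    case False
    with assms show ?thesis by (intro *) simp_all
  qed
qed

lemma qbinom_X_power_eq_upto_inverse_qpoch:
  fixes s N k L :: nat
  assumes "k \<le> N" "n < s * (min k (N - k) + 1)" "n < s * (L + 1)"
  shows "fps_eq_upto n (qbinom (fps_X ^ s) N (int k)) (inverse (qpoch (fps_X ^ s :: 'a::field fps) L))"
proof -
  let ?q = "qpoch (fps_X ^ s :: 'a fps)"
  let ?G = "qbinom (fps_X ^ s :: 'a fps) N (int k)"
  have "s \<noteq> 0"
    using assms(3) by (cases s) simp_all
  then have q0: "?q L $ 0 = 1"
    by (intro qpoch_fps_nth_0) (simp add: fps_nth_power_0)
  have approx: "fps_eq_upto n (?q m) (?q L)" if "min k (N - k) \<le> m" for m
  proof (rule qpoch_X_power_eq_upto)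
    have "s * (min (min k (N - k)) L + 1) \<le> s * (min m L + 1)"
      using that by (intro mult_le_mono2) (simp add: min_def)
    moreover have "n < s * (min (min k (N - k)) L + 1)"
      using assms(2,3) by (simp add: min_def)
    ultimately show "n < s * (min m L + 1)" by linarith
  qed
  have "fps_eq_upto n (?G * ?q L * ?q L) (?G * ?q k * ?q (N - k))"
    using fps_eq_upto_sym[OF approx[of k]] fps_eq_upto_sym[OF approx[of "N - k"]]
    by (intro fps_eq_upto_mult fps_eq_upto_refl) simp_all
  also have "?G * ?q k * ?q (N - k) = ?q N"
    using qbinom_mult_qpoch[OF assms(1)] .
  also have "fps_eq_upto n (?q N) (?q L)"
    using assms(1) by (intro approx) simp
  finally have "fps_eq_upto n (?G * ?q L * ?q L * (inverse (?q L) * inverse (?q L)))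
      (?q L * (inverse (?q L) * inverse (?q L)))"
    by (intro fps_eq_upto_mult fps_eq_upto_refl)
  moreover have inv: "?q L * inverse (?q L) = 1"
    using q0 by (simp add: inverse_mult_eq_1')
  have "?G * ?q L * ?q L * (inverse (?q L) * inverse (?q L))
      = ?G * (?q L * inverse (?q L)) * (?q L * inverse (?q L))"
    by (simp only: mult_ac)
  moreover have "?q L * (inverse (?q L) * inverse (?q L)) = (?q L * inverse (?q L)) * inverse (?q L)"
    by (simp only: mult_ac)
  ultimately show ?thesis
    unfolding inv by simp
qed

lemma qbinom_central_mult_qpoch_eq_upto:
  fixes s R m :: nat and j :: int
  assumes "\<bar>j\<bar> \<le> int R" "m < s * (R - nat \<bar>j\<bar> + 1)"
  shows "fps_eq_upto m (qbinom (fps_X ^ s) (2 * R) (int R + j) * qpoch (fps_X ^ s :: 'a::field fps) R) 1"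
proof -
  let ?P = "qpoch (fps_X ^ s :: 'a fps) R"
  define k where "k = nat (int R + j)"
  have k: "int k = int R + j" "k \<le> 2 * R" "min k (2 * R - k) = R - nat \<bar>j\<bar>"
    using assms(1) by (auto simp: k_def)
  have "s * (min k (2 * R - k) + 1) \<le> s * (R + 1)"
    unfolding k(3) by (intro mult_le_mono2) simp
  then have "fps_eq_upto m (qbinom (fps_X ^ s) (2 * R) (int k)) (inverse ?P)"
    using k(2) assms(2) unfolding k(3)[symmetric]
    by (intro qbinom_X_power_eq_upto_inverse_qpoch) linarith+
  then have "fps_eq_upto m (qbinom (fps_X ^ s) (2 * R) (int R + j)) (inverse ?P)"
    by (simp only: k(1))
  then have "fps_eq_upto m (qbinom (fps_X ^ s) (2 * R) (int R + j) * ?P) (inverse ?P * ?P)"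
    by (rule fps_eq_upto_mult) simp
  moreover have "s \<noteq> 0"
    using assms(2) by (cases s) simp_all
  then have "inverse ?P * ?P = 1"
    by (intro inverse_mult_eq_1) (simp add: qpoch_fps_nth_0)
  ultimately show ?thesis
    by simp
qed

lemma abs_le_two_square_minus: "\<bar>c\<bar> \<le> 2 * c\<^sup>2 - (c::int)"
proof (cases "0 \<le> c")
  case True
  then have "0 \<le> 2 * c * (c - 1) \<or> c = 0"
    by (cases "c = 0") (simp_all add: mult_nonneg_nonneg)
  with True show ?thesis
    by (auto simp: power2_eq_square algebra_simps)
qed (simp add: power2_eq_square)

lemma alt_partition_series_eq_upto:
  assumes "n \<le> L"
  defines "V \<equiv> inverse (qpoch (fps_X ^ 2 :: 'a::field fps) L)"
  shows "fps_eq_upto n (alt_partition_series (4 * n) c) (fps_X ^ nat (2 * c\<^sup>2 - c) * (V * V))"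
proof -
  let ?q = "qpoch (fps_X ^ 2 :: 'a fps)"
  let ?G = "qbinom (fps_X ^ 2 :: 'a fps) (4 * n) (int (2 * n) + c)"
  have "?q (4 * n) $ 0 = 1"
    by (intro qpoch_fps_nth_0) simp
  then have "alt_partition_series (4 * n) c = (alt_partition_series (4 * n) c * ?q (4 * n)) * inverse (?q (4 * n))"
    by (simp add: mult.assoc inverse_mult_eq_1')
  also have "\<dots> = fps_X ^ nat (2 * c\<^sup>2 - c) * (?G * inverse (?q (4 * n)))"
    by (simp add: alt_partition_series_mult_qpoch mult.assoc)
  also have "fps_eq_upto n \<dots> (fps_X ^ nat (2 * c\<^sup>2 - c) * (V * V))"
  proof (rule fps_eq_upto_X_power_mult)
    assume "nat (2 * c\<^sup>2 - c) \<le> n"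
    then have c: "\<bar>c\<bar> \<le> int n"
      using abs_le_two_square_minus[of c] by linarith
    define k where "k = nat (int (2 * n) + c)"
    have k: "int k = int (2 * n) + c" "k \<le> 4 * n" "n \<le> min k (4 * n - k)"
      using c by (auto simp: k_def)
    have "fps_eq_upto n (qbinom (fps_X ^ 2) (4 * n) (int k)) V"
      unfolding V_def by (rule qbinom_X_power_eq_upto_inverse_qpoch) (use k assms(1) in auto)
    then have "fps_eq_upto n ?G V"
      by (simp only: k(1))
    moreover have "fps_eq_upto n (inverse (?q (4 * n))) V"
      unfolding V_def using assms(1) \<open>?q (4 * n) $ 0 = 1\<close>
      by (intro fps_eq_upto_inverse qpoch_X_power_eq_upto) (simp_all add: min_def)
    ultimately have "fps_eq_upto n (?G * inverse (?q (4 * n))) (V * V)"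
      by (rule fps_eq_upto_mult)
    then show "fps_eq_upto (n - nat (2 * c\<^sup>2 - c)) (?G * inverse (?q (4 * n))) (V * V)"
      by (rule fps_eq_upto_mono) simp
  qed
  finally show ?thesis .
qed

lemma abs_le_quadratic:
  assumes "b < a"
  shows "\<bar>j\<bar> \<le> int a * j\<^sup>2 + int b * j"
proof (cases "0 \<le> j")
  case True
  have "j \<le> j\<^sup>2"
    using True by (cases "j = 0") (simp_all add: power2_eq_square mult_le_cancel_left1)
  moreover have "j\<^sup>2 \<le> int a * j\<^sup>2"
    using mult_right_mono[of 1 "int a" "j\<^sup>2"] assms by simp
  moreover have "0 \<le> int b * j"
    using True by simp
  ultimately show ?thesis
    using True by linarith
next
  case False
  have "int a * 1 \<le> int a * (- j)"
    using False by (intro mult_left_mono) simp_all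
  moreover have "int b + 1 \<le> int a"
    using assms by simp
  ultimately have "int b + 1 \<le> int a * (- j)"
    by linarith
  then have "(- j) * (int b + 1) \<le> (- j) * (int a * (- j))"
    using False by (intro mult_left_mono) simp_all
  with False show ?thesis
    by (simp add: power2_eq_square algebra_simps)
qed

lemma jacobi_triple_product_eq_upto:
  fixes a b s n R :: nat
  assumes "b < a" "s \<noteq> 0" "n \<le> R"
  defines "x \<equiv> fps_X ^ s :: 'a::field fps"
  shows "fps_eq_upto n (\<Sum>j=-int R..int R. (-1) ^ nat \<bar>j\<bar> * x ^ nat (int a * j\<^sup>2 + int b * j))
           ((\<Prod>i<R. (1 - x ^ (a - b + 2 * a * i)) * (1 - x ^ (a + b + 2 * a * i))) * qpoch (x ^ (2 * a)) R)"
proof -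
  define e where "e j = nat (int a * j\<^sup>2 + int b * j)" for j
  define P where "P = qpoch (x ^ (2 * a)) R"
  have "(\<Sum>j=-int R..int R. (-1) ^ nat \<bar>j\<bar> * x ^ e j * qbinom (x ^ (2 * a)) (2 * R) (int R + j))
      = (\<Prod>i<R. (1 - x ^ (a - b + 2 * a * i)) * (1 - x ^ (a + b + 2 * a * i)))"
    unfolding e_def using assms(1,2) by (intro jacobi_triple_product_finite) (simp_all add: x_def)
  from this[symmetric] have prod_eq: "(\<Prod>i<R. (1 - x ^ (a - b + 2 * a * i)) * (1 - x ^ (a + b + 2 * a * i))) * P
      = (\<Sum>j=-int R..int R. (-1) ^ nat \<bar>j\<bar> * (x ^ e j * (qbinom (x ^ (2 * a)) (2 * R) (int R + j) * P)))"
    by (simp only: sum_distrib_right mult.assoc)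
  have summand: "fps_eq_upto n (x ^ e j * 1) (x ^ e j * (qbinom (x ^ (2 * a)) (2 * R) (int R + j) * P))"
    for j
    unfolding x_def P_def power_mult[symmetric]
  proof (rule fps_eq_upto_X_power_mult)
    assume se: "s * e j \<le> n"
    have "\<bar>j\<bar> \<le> int (e j)"
      unfolding e_def using abs_le_quadratic[OF assms(1), of j] by linarith
    moreover have "e j \<le> s * e j"
      using assms(2) by simp
    ultimately have "\<bar>j\<bar> \<le> int R" "n - s * e j < R - nat \<bar>j\<bar> + 1"
      using se assms(3) by linarith+
    moreover have "R - nat \<bar>j\<bar> + 1 \<le> s * (2 * a) * (R - nat \<bar>j\<bar> + 1)"
      using mult_le_mono1[of 1 "s * (2 * a)" "R - nat \<bar>j\<bar> + 1"] assms(1,2) by simp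
    ultimately have "fps_eq_upto (n - s * e j) (qbinom (fps_X ^ (s * (2 * a))) (2 * R) (int R + j)
        * qpoch (fps_X ^ (s * (2 * a)) :: 'a fps) R) 1"
      by (intro qbinom_central_mult_qpoch_eq_upto) linarith+
    then show "fps_eq_upto (n - s * e j) 1 (qbinom (fps_X ^ (s * (2 * a))) (2 * R) (int R + j)
        * qpoch (fps_X ^ (s * (2 * a)) :: 'a fps) R)"
      by (rule fps_eq_upto_sym)
  qed
  have "fps_eq_upto n (\<Sum>j=-int R..int R. (-1) ^ nat \<bar>j\<bar> * (x ^ e j * 1))
      (\<Sum>j=-int R..int R. (-1) ^ nat \<bar>j\<bar> * (x ^ e j * (qbinom (x ^ (2 * a)) (2 * R) (int R + j) * P)))"
    by (rule fps_eq_upto_sum, rule fps_eq_upto_mult[OF fps_eq_upto_refl summand])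
  then show ?thesis
    unfolding P_def[symmetric] prod_eq by (simp add: e_def)
qed

section \<open>Power series with nonnegative coefficients\<close>

definition fps_nonneg :: "'a::{zero,ord} fps \<Rightarrow> bool" where
  "fps_nonneg f \<longleftrightarrow> (\<forall>k. 0 \<le> f $ k)"

lemma fps_nonneg_mult:
  fixes f :: "'a::linordered_idom fps"
  shows "fps_nonneg f \<Longrightarrow> fps_nonneg g \<Longrightarrow> fps_nonneg (f * g)"
  unfolding fps_nonneg_def fps_mult_nth by (auto intro!: sum_nonneg)

lemma fps_nonneg_one: "fps_nonneg (1 :: 'a::linordered_idom fps)"
  by (simp add: fps_nonneg_def)

lemma fps_nonneg_prod:
  fixes f :: "'b \<Rightarrow> 'a::linordered_idom fps"
  shows "(\<And>i. i \<in> A \<Longrightarrow> fps_nonneg (f i)) \<Longrightarrow> fps_nonneg (prod f A)"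
  by (induction A rule: infinite_finite_induct) (simp_all add: fps_nonneg_mult fps_nonneg_one)

lemma fps_nth_mult_ge:
  fixes f :: "'a::linordered_idom fps"
  assumes "fps_nonneg f" "fps_nonneg g" "i \<le> k"
  shows "f $ i * g $ (k - i) \<le> (f * g) $ k"
  unfolding fps_mult_nth using assms
  by (intro member_le_sum[where f = "\<lambda>i. f $ i * g $ (k - i)"]) (auto simp: fps_nonneg_def)

lemma inverse_one_minus_X_power:
  assumes "m \<noteq> 0"
  shows "inverse (1 - fps_X ^ m :: 'a::field fps) = Abs_fps (\<lambda>k. of_bool (m dvd k))"
proof (rule fps_inverse_unique, rule fps_ext)
  fix k
  have "(1 - fps_X ^ m :: 'a fps) * f = f - fps_X ^ m * f" for f
    by (simp add: left_diff_distrib)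
  then show "((1 - fps_X ^ m) * Abs_fps (\<lambda>k. of_bool (m dvd k))) $ k = (1 :: 'a fps) $ k"
    using assms by (cases "k = 0") (auto simp: fps_X_power_mult_nth not_less dvd_diff_nat le_imp_diff_is_add dvd_imp_le)
qed

lemma fps_nonneg_inverse_one_minus_X_power:
  "m \<noteq> 0 \<Longrightarrow> fps_nonneg (inverse (1 - fps_X ^ m :: 'a::linordered_field fps))"
  by (simp add: inverse_one_minus_X_power fps_nonneg_def)

lemma fps_prod_nth_0: "prod f A $ 0 = (\<Prod>i\<in>A. f i $ 0 :: 'a::comm_ring_1)"
  by (induction A rule: infinite_finite_induct) simp_all

lemma fps_nonneg_prod_mult_inverse_qpoch:
  fixes g :: "'b \<Rightarrow> nat"
  assumes "finite I" "inj_on g I" "g ` I \<subseteq> {1..L}" "s \<noteq> 0"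
  shows "fps_nonneg ((\<Prod>i\<in>I. 1 - fps_X ^ (s * g i)) * inverse (qpoch (fps_X ^ s :: 'a::linordered_field fps) L))"
proof -
  let ?f = "\<lambda>r. 1 - fps_X ^ (s * r) :: 'a fps"
  let ?A = "\<Prod>r\<in>g ` I. ?f r" and ?B = "\<Prod>r\<in>{1..L} - g ` I. ?f r"
  have "qpoch (fps_X ^ s) L = ?B * ?A"
    unfolding qpoch_def power_mult[symmetric] by (rule prod.subset_diff[OF assms(3)]) simp
  moreover have "(\<Prod>i\<in>I. ?f (g i)) = ?A"
    using prod.reindex[OF assms(2), of ?f] by simp
  moreover have "?A $ 0 = 1"
    unfolding fps_prod_nth_0 using assms(3,4) by (intro prod.neutral) auto
  then have "?A * inverse ?A = 1"
    by (intro inverse_mult_eq_1') simp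
  ultimately have "(\<Prod>i\<in>I. ?f (g i)) * inverse (qpoch (fps_X ^ s) L) = (\<Prod>r\<in>{1..L} - g ` I. inverse (?f r))"
    by (simp add: fps_inverse_mult inverse_prod_fps mult.left_commute)
  also have "fps_nonneg \<dots>"
    using assms(4) by (intro fps_nonneg_prod fps_nonneg_inverse_one_minus_X_power) auto
  finally show ?thesis .
qed

lemma inverse_qpoch_X_power_nth_ge_1:
  assumes "s \<noteq> 0" "L \<noteq> 0"
  shows "1 \<le> inverse (qpoch (fps_X ^ s :: 'a::linordered_field fps) L) $ (s * t)"
proof -
  let ?f = "\<lambda>r. inverse (1 - fps_X ^ (s * r)) :: 'a fps"
  have "{1..L} = insert 1 {2..L}"
    using assms(2) by auto
  then have "inverse (qpoch (fps_X ^ s :: 'a fps) L) = ?f 1 * (\<Prod>r\<in>{2..L}. ?f r)"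
    unfolding qpoch_def power_mult[symmetric] by (simp add: fps_inverse_mult inverse_prod_fps)
  moreover have "fps_nonneg (\<Prod>r\<in>{2..L}. ?f r)"
    using assms(1) by (intro fps_nonneg_prod fps_nonneg_inverse_one_minus_X_power) auto
  moreover have "(\<Prod>r\<in>{2..L}. ?f r) $ 0 = 1"
    unfolding fps_prod_nth_0 using assms(1) by (intro prod.neutral) auto
  moreover have "?f 1 $ (s * t) = 1"
    using assms(1) by (simp add: inverse_one_minus_X_power)
  ultimately show ?thesis
    using fps_nth_mult_ge[of "?f 1" "\<Prod>r\<in>{2..L}. ?f r" "s * t" "s * t"] assms(1)
    by (simp add: fps_nonneg_inverse_one_minus_X_power)
qed

lemma add_mult_less_add_mult:
  fixes m t t' i i' :: nat
  assumes "t \<le> m" "1 \<le> t'" "i < i'"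
  shows "t + m * i < t' + m * i'"
proof -
  have "m * Suc i \<le> m * i'"
    using assms(3) by (intro mult_le_mono2) simp
  then show ?thesis
    using assms(1,2) by simp
qed

lemma add_mult_eq_add_multD:
  fixes m t t' i i' :: nat
  assumes "1 \<le> t" "t \<le> m" "1 \<le> t'" "t' \<le> m" "t + m * i = t' + m * i'"
  shows "i = i' \<and> t = t'"
proof -
  have "i = i'"
    using add_mult_less_add_mult[of t m t' i i'] add_mult_less_add_mult[of t' m t i' i] assms
    by (cases i i' rule: linorder_cases) simp_all
  with assms(5) show ?thesis
    by simp
qed

lemma jacobi_product_mult_qpoch_eq_prod:
  fixes x :: "'a::comm_ring_1"
  assumes "0 < b" "b < a"
  shows "(\<Prod>i<R. (1 - x ^ (a - b + 2 * a * i)) * (1 - x ^ (a + b + 2 * a * i))) * qpoch (x ^ (2 * a)) R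
       = (\<Prod>(i, t)\<in>{..<R} \<times> {a - b, a + b, 2 * a}. 1 - x ^ (t + 2 * a * i))"
proof -
  have "qpoch (x ^ (2 * a)) R = (\<Prod>i<R. 1 - x ^ (2 * a + 2 * a * i))"
    unfolding qpoch_def by (simp add: prod.atLeast1_atMost_eq power_mult[symmetric] algebra_simps)
  moreover have "(\<Prod>t\<in>{a - b, a + b, 2 * a}. 1 - x ^ (t + 2 * a * i))
      = (1 - x ^ (a - b + 2 * a * i)) * (1 - x ^ (a + b + 2 * a * i)) * (1 - x ^ (2 * a + 2 * a * i))" for i
  proof -
    have "a - b \<noteq> a + b" "a - b \<noteq> 2 * a" "a + b \<noteq> 2 * a"
      using assms by auto
    then show ?thesis
      by (simp add: mult.assoc)
  qed
  ultimately show ?thesis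
    by (simp add: prod.cartesian_product[symmetric] prod.distrib)
qed

lemma fps_nonneg_jacobi_product_mult_inverse_qpoch:
  assumes "0 < b" "b < a" "2 * a * R \<le> L"
  defines "x \<equiv> fps_X ^ 2 :: 'a::linordered_field fps"
  shows "fps_nonneg ((\<Prod>i<R. (1 - x ^ (a - b + 2 * a * i)) * (1 - x ^ (a + b + 2 * a * i)))
                      * qpoch (x ^ (2 * a)) R * inverse (qpoch x L))"
proof -
  let ?I = "{..<R} \<times> {a - b, a + b, 2 * a}"
  let ?g = "\<lambda>(i, t). t + 2 * a * i"
  have t: "1 \<le> t \<and> t \<le> 2 * a" if "t \<in> {a - b, a + b, 2 * a}" for t
    using that assms(1,2) by auto
  have "inj_on ?g ?I"
  proof (rule inj_onI)
    fix p q
    assume "p \<in> ?I" "q \<in> ?I" "?g p = ?g q"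
    moreover obtain i t i' t' where "p = (i, t)" "q = (i', t')"
      by (cases p, cases q)
    ultimately show "p = q"
      using t add_mult_eq_add_multD[of t "2 * a" t' i i'] by auto
  qed
  moreover have "?g ` ?I \<subseteq> {1..L}"
  proof clarify
    fix i t
    assume "i < R" "t \<in> {a - b, a + b, 2 * a}"
    moreover from \<open>i < R\<close> have "2 * a * Suc i \<le> 2 * a * R"
      by (intro mult_le_mono2) simp
    ultimately show "t + 2 * a * i \<in> {1..L}"
      using t assms(3) by fastforce
  qed
  ultimately have "fps_nonneg ((\<Prod>p\<in>?I. 1 - fps_X ^ (2 * ?g p)) * inverse (qpoch (fps_X ^ 2 :: 'a fps) L))"
    by (intro fps_nonneg_prod_mult_inverse_qpoch) simp_all
  then show ?thesis
    unfolding x_def jacobi_product_mult_qpoch_eq_prod[OF assms(1,2)]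
    by (simp only: split_def power_mult)
qed

lemma sum_int_interval_even_odd:
  fixes f :: "int \<Rightarrow> 'a::comm_monoid_add" and R :: int
  shows "(\<Sum>c=-2*R..2*R+1. f c) = (\<Sum>j=-R..R. f (-2*j) + f (2*j+1))"
proof -
  let ?E = "(\<lambda>j. -2*j) ` {-R..R}" and ?O = "(\<lambda>j. 2*j+1) ` {-R..R}"
  have "{-2*R..2*R+1} = ?E \<union> ?O"
  proof (intro equalityI subsetI)
    fix c assume c: "c \<in> {-2*R..2*R+1}"
    show "c \<in> ?E \<union> ?O"
    proof (cases "even c")
      case True
      define j where "j = - (c div 2)"
      with True have j: "c = -2 * j"
        by simp
      with c have "j \<in> {-R..R}"
        by auto
      with j show ?thesis
        by blast
    next
      case False
      then obtain j where j: "c = 2 * j + 1"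
        by (rule oddE)
      with c have "j \<in> {-R..R}"
        by auto
      with j show ?thesis
        by blast
    qed
  qed auto
  moreover have "-2 * i \<noteq> 2 * j + 1" for i j :: int
    by presburger
  then have "?E \<inter> ?O = {}"
    by blast
  moreover have "inj_on (\<lambda>j. -2*j) {-R..R}" "inj_on (\<lambda>j. 2*j+1) {-R..R}"
    by (auto simp: inj_on_def)
  ultimately show ?thesis
    by (simp add: sum.union_disjoint sum.reindex sum.distrib)
qed

lemma mod_4_sign_even_odd:
  fixes j :: int
  shows "(if (-2 * j) mod 4 \<in> {0, 1} then 1 else -1) = ((-1) ^ nat \<bar>j\<bar> :: 'a::comm_ring_1)"
    and "(if (2 * j + 1) mod 4 \<in> {0, 1} then 1 else -1) = ((-1) ^ nat \<bar>j\<bar> :: 'a::comm_ring_1)"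
proof -
  have "(-2 * j) mod 4 \<in> {0, 1} \<longleftrightarrow> even j" "(2 * j + 1) mod 4 \<in> {0, 1} \<longleftrightarrow> even j"
    unfolding insert_iff empty_iff by presburger+
  then show "(if (-2 * j) mod 4 \<in> {0, 1} then 1 else -1) = ((-1) ^ nat \<bar>j\<bar> :: 'a)"
    and "(if (2 * j + 1) mod 4 \<in> {0, 1} then 1 else -1) = ((-1) ^ nat \<bar>j\<bar> :: 'a)"
    by (simp_all add: minus_one_power_iff even_nat_iff)
qed

lemma sum_partitions_mod_4_sign_eq_nth:
  fixes n :: nat
  defines "x \<equiv> fps_X ^ 2 :: real fps"
  defines "V \<equiv> inverse (qpoch x (8 * Suc n))"
  defines "Q b \<equiv> (\<Prod>i<n. (1 - x ^ (4 - b + 2 * 4 * i)) * (1 - x ^ (4 + b + 2 * 4 * i))) * qpoch (x ^ (2 * 4)) n"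
  shows "(\<Sum>xs\<in>partitions n. if alt_num_odd xs mod 4 \<in> {0, 1} then 1 else -1)
       = (Q 1 * V * V + fps_X * (Q 3 * V * V)) $ n"
proof -
  define h :: "int \<Rightarrow> real" where "h c = (if c mod 4 \<in> {0, 1} then 1 else -1)" for c
  define E where "E b = (\<Sum>j=-int n..int n. (-1) ^ nat \<bar>j\<bar> * x ^ nat (int 4 * j\<^sup>2 + int b * j))" for b
  let ?C = "{-2 * int n..2 * int n + 1}"
  have count: "(\<Sum>xs\<in>partitions n. h (alt_num_odd xs)) = (\<Sum>c\<in>?C. fps_const (h c) * alt_partition_series (4 * n) c) $ n"
    by (rule sum_partitions_eq_nth_alt_partition_series) auto
  have "fps_eq_upto n (\<Sum>c\<in>?C. fps_const (h c) * alt_partition_series (4 * n) c)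
      (\<Sum>c\<in>?C. fps_const (h c) * (fps_X ^ nat (2 * c\<^sup>2 - c) * (V * V)))"
    unfolding V_def x_def
    by (intro fps_eq_upto_sum fps_eq_upto_mult[OF fps_eq_upto_refl] alt_partition_series_eq_upto) simp
  also have "(\<Sum>c\<in>?C. fps_const (h c) * (fps_X ^ nat (2 * c\<^sup>2 - c) * (V * V)))
      = E 1 * (V * V) + fps_X * (E 3 * (V * V))"
  proof -
    have h: "fps_const (h c) = (if c mod 4 \<in> {0, 1} then 1 else -1)" for c
      by (simp add: h_def flip: fps_const_neg)
    have "nat (2 * (-2 * j)\<^sup>2 - (-2 * j)) = 2 * nat (int 4 * j\<^sup>2 + int 1 * j)"
      and "nat (2 * (2 * j + 1)\<^sup>2 - (2 * j + 1)) = 1 + 2 * nat (int 4 * j\<^sup>2 + int 3 * j)" for j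
      using quadratic_nonneg_int[of 1 4 j] quadratic_nonneg_int[of 3 4 j]
      by (simp_all add: power2_eq_square algebra_simps nat_mult_distrib flip: nat_add_distrib)
    then have "fps_const (h (-2 * j)) * (fps_X ^ nat (2 * (-2 * j)\<^sup>2 - (-2 * j)) * (V * V))
        + fps_const (h (2 * j + 1)) * (fps_X ^ nat (2 * (2 * j + 1)\<^sup>2 - (2 * j + 1)) * (V * V))
      = (-1) ^ nat \<bar>j\<bar> * x ^ nat (int 4 * j\<^sup>2 + int 1 * j) * (V * V)
        + fps_X * ((-1) ^ nat \<bar>j\<bar> * x ^ nat (int 4 * j\<^sup>2 + int 3 * j) * (V * V))" for j
      unfolding h mod_4_sign_even_odd x_def by (simp add: power_mult mult_ac)
    then show ?thesis
      unfolding sum_int_interval_even_odd E_def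
      by (simp add: sum.distrib sum_distrib_left sum_distrib_right mult_ac)
  qed
  also have "fps_eq_upto n (E 1 * (V * V) + fps_X * (E 3 * (V * V))) (Q 1 * (V * V) + fps_X * (Q 3 * (V * V)))"
  proof -
    have "fps_eq_upto n (E b) (Q b)" if "b < 4" for b
      unfolding E_def Q_def x_def using that
      by (intro jacobi_triple_product_eq_upto) simp_all
    then show ?thesis
      by (intro fps_eq_upto_add fps_eq_upto_mult fps_eq_upto_refl) simp_all
  qed
  finally show ?thesis
    using count by (simp add: fps_eq_upto_def h_def mult.assoc)
qed

theorem sum_partitions_mod_4_sign_pos:
  "0 < (\<Sum>xs\<in>partitions n. if alt_num_odd xs mod 4 \<in> {0, 1} then 1 else -1 :: real)"
proof -
  let ?x = "fps_X ^ 2 :: real fps"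
  let ?V = "inverse (qpoch ?x (8 * Suc n))"
  let ?Q = "\<lambda>b. (\<Prod>i<n. (1 - ?x ^ (4 - b + 2 * 4 * i)) * (1 - ?x ^ (4 + b + 2 * 4 * i))) * qpoch (?x ^ (2 * 4)) n"
  have QV: "fps_nonneg (?Q b * ?V)" "(?Q b * ?V) $ 0 = 1" if "b \<in> {1, 3}" for b
  proof -
    show "fps_nonneg (?Q b * ?V)"
      using that by (intro fps_nonneg_jacobi_product_mult_inverse_qpoch) auto
    have "(\<Prod>i<n. (1 - ?x ^ (4 - b + 2 * 4 * i)) * (1 - ?x ^ (4 + b + 2 * 4 * i))) $ 0 = 1"
      unfolding fps_prod_nth_0 using that by (intro prod.neutral) (auto simp: fps_nth_power_0 power_0_left)
    then show "(?Q b * ?V) $ 0 = 1"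
      by (simp add: qpoch_fps_nth_0)
  qed
  have V: "fps_nonneg ?V" "1 \<le> ?V $ (2 * t)" for t
    using fps_nonneg_prod_mult_inverse_qpoch[of "{}" id "8 * Suc n" 2] inverse_qpoch_X_power_nth_ge_1[of 2 "8 * Suc n" t]
    by simp_all
  have nonneg: "0 \<le> (?Q b * ?V * ?V) $ k" if "b \<in> {1, 3}" for b k
    using fps_nonneg_mult[OF QV(1)[OF that] V(1)] by (simp add: fps_nonneg_def)
  have ge_1: "1 \<le> (?Q b * ?V * ?V) $ (2 * t)" if "b \<in> {1, 3}" for b t
    using fps_nth_mult_ge[OF QV(1)[OF that] V(1), of 0 "2 * t"] QV(2)[OF that] V(2)[of t] by simp
  have "0 < (?Q 1 * ?V * ?V + fps_X * (?Q 3 * ?V * ?V)) $ n"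
  proof (cases "even n")
    case True
    then obtain t where "n = 2 * t" ..
    then have "1 \<le> (?Q 1 * ?V * ?V) $ n"
      using ge_1[of 1 t] by simp
    moreover have "0 \<le> (fps_X * (?Q 3 * ?V * ?V)) $ n"
      using nonneg[of 3 "n - 1"] by simp
    ultimately show ?thesis
      unfolding fps_add_nth by linarith
  next
    case False
    then obtain t where "n = 2 * t + 1" ..
    then have "1 \<le> (fps_X * (?Q 3 * ?V * ?V)) $ n"
      using ge_1[of 3 t] by simp
    moreover have "0 \<le> (?Q 1 * ?V * ?V) $ n"
      using nonneg[of 1 n] by simp
    ultimately show ?thesis
      unfolding fps_add_nth by linarith
  qed
  then show ?thesis
    using sum_partitions_mod_4_sign_eq_nth[of n] by simp
qed

lemma card_partitions_alt_mod_4_less: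
  "card {xs \<in> partitions n. alt_num_odd xs mod 4 \<notin> {0, 1}}
   < card {xs \<in> partitions n. alt_num_odd xs mod 4 \<in> {0, 1}}"
proof -
  have "(\<Sum>xs\<in>partitions n. if alt_num_odd xs mod 4 \<in> {0, 1} then 1 else -1 :: real)
      = real (card {xs \<in> partitions n. alt_num_odd xs mod 4 \<in> {0, 1}})
        - real (card {xs \<in> partitions n. alt_num_odd xs mod 4 \<notin> {0, 1}})"
    by (simp add: sum.If_cases finite_partitions Int_def Collect_conj_eq[symmetric])
  with sum_partitions_mod_4_sign_pos[of n] show ?thesis
    by linarith
qed

theorem mainTheorem2:
  fixes n :: nat
  shows "(n mod 4 \<in> {0, 1} \<longrightarrow> real (p_i 0 n) > real (p n) / 2) \<and>
         (n mod 4 \<in> {2, 3} \<longrightarrow> real (p_i 0 n) < real (p n) / 2)"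
proof -
  define A where "A = {xs \<in> partitions n. alt_num_odd xs mod 4 \<in> {0, 1}}"
  define B where "B = {xs \<in> partitions n. alt_num_odd xs mod 4 \<notin> {0, 1}}"
  have "card B < card A"
    unfolding A_def B_def by (rule card_partitions_alt_mod_4_less)
  moreover have "p n = card A + card B"
    unfolding p_def A_def B_def using finite_partitions
    by (subst card_Un_disjoint[symmetric]) (auto intro!: arg_cong[where f = card])
  moreover have "p_i 0 n = (if int n mod 4 \<in> {0, 1} then card A else card B)"
    unfolding p_i_0_eq_card A_def B_def by auto
  moreover have "int n mod 4 \<in> {0, 1} \<longleftrightarrow> n mod 4 \<in> {0, 1}"
    unfolding insert_iff empty_iff by presburger
  ultimately show ?thesis
    by auto
qed

end
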